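(* Let $\mathcal{E}$ be a left $\tilde{\mathcal{A}}_{conv.}$-module such that (1) $B(\mathcal{E})\subset\tilde A(\mathcal{E})$ and (2) there exists $N\in\mathbb{N}$ with $a^N\tilde A(\mathcal{E})=0$. Then $B(\mathcal{E})=\tilde A(\mathcal{E})\subset\ker b^{2N}$.
   Context: $\tilde{\mathcal{A}}_{conv.}$ is the algebra of formal series $\sum\gamma_{p,q}a^pb^q$ in variables $a,b$ with $ab-ba=b^2$ such that $|\gamma_{p,q}|\le C_RR^{p+q}q!$ for some $R>1$, $C_R>0$; $B=\mathbb{C}\{\{b\}\}$ is its subalgebra of series $\sum c_qb^q$ with $|c_q|\le CR^qq!$. For a left $\tilde{\mathcal{A}}_{conv.}$-module $\mathcal{E}$: $B(\mathcal{E}):=\{x\in\mathcal{E}:\exists N,\ b^Nx=0\}$ is its $b$-torsion, $A(\mathcal{E})$ its $a$-torsion $\{x:\exists N,\ a^Nx=0\}$, and $\tilde A(\mathcal{E}):=\{x\in\mathcal{E}: Bx\subset A(\mathcal{E})\}$. *)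

theory Defs
  imports Complex_Main
begin

text \<open>An element \<open>\<Sum> \<gamma>(p,q) a^p b^q\<close> (normally ordered: powers of a to the left)
  of the algebra of formal series in a, b with ab - ba = b^2 is represented by its
  coefficient function \<open>\<gamma> :: nat \<Rightarrow> nat \<Rightarrow> complex\<close>.\<close>

type_synonym ser = "nat \<Rightarrow> nat \<Rightarrow> complex"

text \<open>Structure constants: \<open>b^q a^r = \<Sum>_{i,j} bacoef q r i j a^i b^j\<close>.
  Derived from \<open>b^j a = (a - j b) b^j\<close>, i.e.
  \<open>a^i b^j a = a^(i+1) b^j - j a^i b^(j+1)\<close>.\<close>
primrec bacoef :: "nat \<Rightarrow> nat \<Rightarrow> nat \<Rightarrow> nat \<Rightarrow> int" where
  "bacoef q 0 i j = (if i = 0 \<and> j = q then 1 else 0)"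
| "bacoef q (Suc r) i j =
     (if i = 0 then 0 else bacoef q r (i - 1) j)
   - (if j = 0 then 0 else int (j - 1) * bacoef q r i (j - 1))"

text \<open>Product: \<open>a^p b^q \<cdot> a^r b^s = a^p (b^q a^r) b^s\<close>; each coefficient is a finite sum.\<close>
definition A_mult :: "ser \<Rightarrow> ser \<Rightarrow> ser" where
  "A_mult f g = (\<lambda>i j. \<Sum>p\<le>i. \<Sum>s\<le>j. \<Sum>q\<le>(i - p) + (j - s).
      f p q * g ((i - p) + (j - s) - q) s * of_int (bacoef q ((i - p) + (j - s) - q) (i - p) (j - s)))"

definition A_add :: "ser \<Rightarrow> ser \<Rightarrow> ser" where
  "A_add f g = (\<lambda>p q. f p q + g p q)"

definition A_one :: ser where
  "A_one = (\<lambda>p q. if p = 0 \<and> q = 0 then 1 else 0)"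

definition A_a :: ser where
  "A_a = (\<lambda>p q. if p = 1 \<and> q = 0 then 1 else 0)"

definition A_b :: ser where
  "A_b = (\<lambda>p q. if p = 0 \<and> q = 1 then 1 else 0)"

definition Aconv :: "ser set" where
  "Aconv = {\<gamma>. \<exists>R C. R > 1 \<and> C > 0 \<and>
      (\<forall>p q. norm (\<gamma> p q) \<le> C * R ^ (p + q) * fact q)}"

definition Bconv :: "ser set" where
  "Bconv = {\<gamma>. (\<forall>p q. p \<noteq> 0 \<longrightarrow> \<gamma> p q = 0) \<and>
      (\<exists>R C. R > 1 \<and> C > 0 \<and> (\<forall>q. norm (\<gamma> 0 q) \<le> C * R ^ q * fact q))}"

definition Aconv_module :: "(ser \<Rightarrow> 'm::ab_group_add \<Rightarrow> 'm) \<Rightarrow> bool" where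
  "Aconv_module act \<longleftrightarrow>
     (\<forall>f\<in>Aconv. \<forall>x y. act f (x + y) = act f x + act f y) \<and>
     (\<forall>f\<in>Aconv. \<forall>g\<in>Aconv. \<forall>x. act (A_add f g) x = act f x + act g x) \<and>
     (\<forall>f\<in>Aconv. \<forall>g\<in>Aconv. \<forall>x. act (A_mult f g) x = act f (act g x)) \<and>
     (\<forall>x. act A_one x = x)"

definition btors :: "(ser \<Rightarrow> 'm::ab_group_add \<Rightarrow> 'm) \<Rightarrow> 'm set" where
  "btors act = {x. \<exists>N. (act A_b ^^ N) x = 0}"

definition ators :: "(ser \<Rightarrow> 'm::ab_group_add \<Rightarrow> 'm) \<Rightarrow> 'm set" where
  "ators act = {x. \<exists>N. (act A_a ^^ N) x = 0}"

definition atilde :: "(ser \<Rightarrow> 'm::ab_group_add \<Rightarrow> 'm) \<Rightarrow> 'm set" where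
  "atilde act = {x. \<forall>\<beta>\<in>Bconv. act \<beta> x \<in> ators act}"

end

theory Submission
  imports Defs
begin

text \<open>For \<open>\<beta> \<in> B\<close> one has \<open>\<beta> a = a \<beta> - b^2 \<beta>'\<close> with \<open>b^2 \<beta>' \<in> B\<close>, so \<open>\<tilde>A(E)\<close> is stable
  under \<open>a\<close> and \<open>b\<close>. From \<open>ab - ba = b^2\<close> one gets \<open>a b^r = b^r a + r b^(r+1)\<close>; hence for
  \<open>y \<in> \<tilde>A(E)\<close> and \<open>i < N\<close> the vector \<open>0 = b^(N-1-i) a^N b a^i y\<close> equals \<open>N! b^(2N-i) a^i y\<close>
  plus terms \<open>b^s a^t y\<close> with \<open>t > i\<close> and \<open>s + t \<ge> 2N\<close>. By descending induction on \<open>i\<close> all of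
  these vanish, \<open>N!\<close> being invertible in \<open>\<complex> \<subseteq> \<tilde>A\<^sub>c\<^sub>o\<^sub>n\<^sub>v\<close>. For \<open>i = 0\<close> this says
  \<open>b^(2N) \<tilde>A(E) = 0\<close>, whence \<open>\<tilde>A(E) \<subseteq> B(E)\<close>.\<close>

primrec nat_mult :: "nat \<Rightarrow> 'a::monoid_add \<Rightarrow> 'a" where
  "nat_mult 0 x = 0"
| "nat_mult (Suc n) x = x + nat_mult n x"

lemma nat_mult_zero_right [simp]: "nat_mult n 0 = 0"
  by (induction n) simp_all

lemma nat_mult_add: "nat_mult (m + n) x = nat_mult m x + nat_mult n x"
  by (induction m) (simp_all add: add.assoc)

lemma nat_mult_nat_mult: "nat_mult m (nat_mult n x) = nat_mult (m * n) x"
  by (induction m) (simp_all add: nat_mult_add)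

lemma (in additive) nat_mult: "f (nat_mult n x) = nat_mult n (f x)"
  by (induction n) (simp_all add: zero add)

lemma additive_funpow:
  fixes f :: "'a::ab_group_add \<Rightarrow> 'a"
  shows "additive f \<Longrightarrow> additive (f ^^ n)"
  unfolding additive_def by (induction n) auto

lemma additive_comp: "additive f \<Longrightarrow> additive g \<Longrightarrow> additive (f \<circ> g)"
  by (simp add: additive_def)

context
  fixes A B :: "'m::ab_group_add \<Rightarrow> 'm"
  assumes additive_A: "additive A" and additive_B: "additive B"
    and A_B_comm: "\<And>w. A (B w) = B (A w) + B (B w)"
begin

lemma A_B_power: "A ((B ^^ r) w) = (B ^^ r) (A w) + nat_mult r ((B ^^ Suc r) w)"
proof (induction r arbitrary: w)
  case 0
  show ?case by simp
next
  case (Suc r)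
  interpret Br: additive "B ^^ r" by (rule additive_funpow[OF additive_B])
  have "A ((B ^^ Suc r) w) = A ((B ^^ r) (B w))"
    by (simp add: funpow_Suc_right del: funpow.simps)
  also have "\<dots> = (B ^^ r) (B (A w)) + (B ^^ r) (B (B w)) + nat_mult r ((B ^^ Suc r) (B w))"
    by (simp add: Suc.IH A_B_comm Br.add del: funpow.simps)
  also have "\<dots> = (B ^^ Suc r) (A w) + nat_mult (Suc r) ((B ^^ Suc (Suc r)) w)"
    by (simp add: funpow_Suc_right add.assoc del: funpow.simps)
  finally show ?case .
qed

text \<open>In the expansion of \<open>a^m b^r\<close> by the previous lemma, every term but \<open>(r)\<^sub>m b^(r+m)\<close>
  keeps a positive power of \<open>a\<close> on the right, and is killed by the hypothesis.\<close>
lemma B_power_A_power_B_power: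
  assumes "\<And>s t. 0 < t \<Longrightarrow> K \<le> s + t \<Longrightarrow> (B ^^ s) ((A ^^ t) x) = 0"
    and "K \<le> e + r + m"
  shows "(B ^^ e) ((A ^^ m) ((B ^^ r) x)) = nat_mult (pochhammer r m) ((B ^^ (e + r + m)) x)"
  using assms
proof (induction m arbitrary: x K r)
  case 0
  then show ?case by (simp add: funpow_add)
next
  case (Suc m)
  interpret BeAm: additive "(B ^^ e) \<circ> (A ^^ m)"
    by (intro additive_comp additive_funpow additive_A additive_B)
  have "(B ^^ e) ((A ^^ Suc m) ((B ^^ r) x))
      = (B ^^ e) ((A ^^ m) ((B ^^ r) (A x))) + nat_mult r ((B ^^ e) ((A ^^ m) ((B ^^ Suc r) x)))"
    using BeAm.add BeAm.nat_mult by (simp add: funpow_Suc_right A_B_power del: funpow.simps)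
  also have "(B ^^ e) ((A ^^ m) ((B ^^ r) (A x)))
      = nat_mult (pochhammer r m) ((B ^^ (e + r + m)) (A x))"
  proof (rule Suc.IH)
    show "(B ^^ s) ((A ^^ t) (A x)) = 0" if "0 < t" "K - 1 \<le> s + t" for s t
      using Suc.prems(1)[of "Suc t" s] that by (simp add: funpow_Suc_right del: funpow.simps)
  qed (use Suc.prems(2) in simp)
  also have "(B ^^ (e + r + m)) (A x) = 0"
    using Suc.prems(1)[of 1] Suc.prems(2) by simp
  also have "(B ^^ e) ((A ^^ m) ((B ^^ Suc r) x))
      = nat_mult (pochhammer (Suc r) m) ((B ^^ (e + Suc r + m)) x)"
    using Suc.prems by (intro Suc.IH) simp_all
  finally show ?case
    by (simp add: nat_mult_nat_mult pochhammer_rec)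
qed

lemma B_power_vanishes:
  assumes A_M: "A ` M \<subseteq> M" and B_M: "B ` M \<subseteq> M"
    and A_N: "\<And>y. y \<in> M \<Longrightarrow> (A ^^ N) y = 0"
    and torsion_free: "\<And>n (x::'m). 0 < n \<Longrightarrow> nat_mult n x = 0 \<Longrightarrow> x = 0"
    and "y \<in> M"
  shows "(B ^^ (2 * N)) y = 0"
proof -
  interpret Bpow: additive "B ^^ n" for n by (rule additive_funpow[OF additive_B])
  have A_pow_M: "(A ^^ t) y \<in> M" if "y \<in> M" for t y
    using that A_M by (induction t) auto
  have "(B ^^ s) ((A ^^ i) y) = 0" if "y \<in> M" "2 * N \<le> s + i" for i s y
    using that
  proof (induction "N - i" arbitrary: i s y rule: less_induct)
    case less
    show ?case
    proof (cases "N \<le> i")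
      case True
      then have "(A ^^ i) y = (A ^^ N) ((A ^^ (i - N)) y)"
        by (metis True funpow_add le_add_diff_inverse comp_apply)
      then show ?thesis
        using A_N A_pow_M less.prems Bpow.zero by simp
    next
      case False
      define x where "x = (A ^^ i) y"
      have "B x \<in> M"
        using A_pow_M B_M less.prems(1) unfolding x_def by blast
      then have "(B ^^ (N - 1 - i)) ((A ^^ N) ((B ^^ 1) x)) = 0"
        using A_N Bpow.zero by simp
      also have "(B ^^ (N - 1 - i)) ((A ^^ N) ((B ^^ 1) x))
          = nat_mult (pochhammer 1 N) ((B ^^ (N - 1 - i + 1 + N)) x)"
      proof (rule B_power_A_power_B_power)
        show "(B ^^ s') ((A ^^ t) x) = 0" if "0 < t" "2 * N - i \<le> s' + t" for s' t
          using less.hyps[of "t + i"] less.prems that False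
          by (simp add: x_def funpow_add)
      qed (use False in simp)
      also have "N - 1 - i + 1 + N = 2 * N - i"
        using False by simp
      finally have "nat_mult (fact N) ((B ^^ (2 * N - i)) x) = 0"
        by (simp only: pochhammer_fact)
      then have "(B ^^ (2 * N - i)) x = 0"
        using torsion_free[of "fact N"] by simp
      moreover have "(B ^^ s) x = (B ^^ (s - (2 * N - i))) ((B ^^ (2 * N - i)) x)"
        using less.prems(2) by (metis funpow_add comp_apply le_add_diff_inverse2 le_diff_conv)
      ultimately show ?thesis
        using Bpow.zero by (simp add: x_def)
    qed
  qed
  from this[of y "2 * N" 0] show ?thesis using \<open>y \<in> M\<close> by simp
qed

end

lemma sum_eq_single:
  assumes "finite S" "k \<in> S" "\<And>x. x \<in> S \<Longrightarrow> x \<noteq> k \<Longrightarrow> f x = 0"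
  shows "sum f S = f k"
  using sum.mono_neutral_right[of S "{k}" f] assms by auto

definition b_series :: "ser \<Rightarrow> bool" where
  "b_series \<beta> \<longleftrightarrow> (\<forall>p q. p \<noteq> 0 \<longrightarrow> \<beta> p q = 0)"

definition A_const :: "complex \<Rightarrow> ser" where
  "A_const c = (\<lambda>p q. if p = 0 \<and> q = 0 then c else 0)"

definition minus_b2_deriv :: "ser \<Rightarrow> ser" where
  "minus_b2_deriv \<beta> = (\<lambda>i j. if i = 0 \<and> j \<noteq> 0 then - of_nat (j - 1) * \<beta> 0 (j - 1) else 0)"

lemma bacoef_0_left: "bacoef 0 r i j = (if i = r \<and> j = 0 then 1 else 0)"
  by (induction r arbitrary: i j) auto

lemma bacoef_1_right: "bacoef q (Suc 0) i j =
   (if i = 1 \<and> j = q then 1 else 0) - (if j \<noteq> 0 \<and> i = 0 \<and> j - 1 = q then int (j - 1) else 0)"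
  by auto

lemma A_mult_A_a_left: "A_mult A_a g = (\<lambda>i j. if i = 0 then 0 else g (i - 1) j)"
proof (intro ext)
  fix i j
  show "A_mult A_a g i j = (if i = 0 then 0 else g (i - 1) j)"
  proof (cases "i = 0")
    case True
    then show ?thesis unfolding A_mult_def A_a_def by simp
  next
    case False
    have "A_mult A_a g i j = (\<Sum>s\<le>j. \<Sum>q\<le>(i - 1) + (j - s).
      A_a 1 q * g ((i - 1) + (j - s) - q) s * of_int (bacoef q ((i - 1) + (j - s) - q) (i - 1) (j - s)))"
      unfolding A_mult_def by (rule sum_eq_single) (use False in \<open>auto simp: A_a_def\<close>)
    also have "\<dots> = (\<Sum>q\<le>i - 1.
      A_a 1 q * g ((i - 1) - q) j * of_int (bacoef q ((i - 1) - q) (i - 1) 0))"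
      by (subst sum_eq_single[where k=j]) (auto intro!: sum.neutral simp: A_a_def bacoef_0_left)
    also have "\<dots> = g (i - 1) j"
      by (subst sum_eq_single[where k=0]) (auto simp: A_a_def bacoef_0_left)
    finally show ?thesis using False by simp
  qed
qed

lemma A_mult_b_series_left:
  assumes "b_series \<beta>"
  shows "A_mult \<beta> g i j = (\<Sum>s\<le>j. \<Sum>q\<le>i + (j - s).
      \<beta> 0 q * g (i + (j - s) - q) s * of_int (bacoef q (i + (j - s) - q) i (j - s)))"
  unfolding A_mult_def
  by (subst sum_eq_single[where k=0]) (use assms in \<open>auto simp: b_series_def\<close>)

lemma A_mult_b_series_A_b:
  assumes "b_series \<beta>"
  shows "A_mult \<beta> A_b = (\<lambda>i j. if i = 0 \<and> j \<noteq> 0 then \<beta> 0 (j - 1) else 0)"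
proof (intro ext)
  fix i j
  show "A_mult \<beta> A_b i j = (if i = 0 \<and> j \<noteq> 0 then \<beta> 0 (j - 1) else 0)"
  proof (cases "j = 0")
    case True
    then show ?thesis unfolding A_mult_b_series_left[OF assms] by (auto simp: A_b_def)
  next
    case False
    have "A_mult \<beta> A_b i j = (\<Sum>q\<le>i + (j - 1).
      \<beta> 0 q * A_b (i + (j - 1) - q) 1 * of_int (bacoef q (i + (j - 1) - q) i (j - 1)))"
      unfolding A_mult_b_series_left[OF assms]
      by (rule sum_eq_single) (use False in \<open>auto intro!: sum.neutral simp: A_b_def\<close>)
    also have "\<dots> = \<beta> 0 (i + (j - 1)) * of_int (bacoef (i + (j - 1)) 0 i (j - 1))"
      by (subst sum_eq_single[where k="i + (j - 1)"]) (auto simp: A_b_def)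
    finally show ?thesis using False by auto
  qed
qed

lemma A_mult_b_series_A_a:
  assumes "b_series \<beta>"
  shows "A_mult \<beta> A_a = (\<lambda>i j. if i = 1 then \<beta> 0 j
      else if i = 0 \<and> j \<noteq> 0 then - of_nat (j - 1) * \<beta> 0 (j - 1) else 0)"
proof (intro ext)
  fix i j
  show "A_mult \<beta> A_a i j = (if i = 1 then \<beta> 0 j
      else if i = 0 \<and> j \<noteq> 0 then - of_nat (j - 1) * \<beta> 0 (j - 1) else 0)"
  proof (cases "i + j = 0")
    case True
    then show ?thesis unfolding A_mult_b_series_left[OF assms] by (auto simp: A_a_def)
  next
    case False
    have "A_mult \<beta> A_a i j = (\<Sum>q\<le>i + j. \<beta> 0 q * A_a (i + j - q) 0 * of_int (bacoef q (i + j - q) i j))"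
      unfolding A_mult_b_series_left[OF assms]
      by (subst sum_eq_single[where k=0]) (auto intro!: sum.neutral simp: A_a_def)
    also have "\<dots> = \<beta> 0 (i + j - 1) * of_int (bacoef (i + j - 1) 1 i j)"
      by (subst sum_eq_single[where k="i + j - 1"]) (use False in \<open>auto simp: A_a_def\<close>)
    finally show ?thesis
      using False by (auto simp: bacoef_1_right of_nat_diff algebra_simps simp del: bacoef.simps)
  qed
qed

lemma b_series_A_b: "b_series A_b"
  by (simp add: b_series_def A_b_def)

lemma b_series_if_Bconv: "\<beta> \<in> Bconv \<Longrightarrow> b_series \<beta>"
  by (simp add: Bconv_def b_series_def)

lemma A_mult_A_a_A_b: "A_mult A_a A_b = A_add (A_mult A_b A_a) (A_mult A_b A_b)"
  unfolding A_mult_A_a_left A_mult_b_series_A_a[OF b_series_A_b]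
    A_mult_b_series_A_b[OF b_series_A_b] A_add_def
  by (intro ext) (auto simp: A_b_def simp del: of_nat_diff)

lemma A_mult_b_series_A_a_eq:
  assumes "b_series \<beta>"
  shows "A_mult \<beta> A_a = A_add (A_mult A_a \<beta>) (minus_b2_deriv \<beta>)"
  unfolding A_mult_b_series_A_a[OF assms] A_mult_A_a_left A_add_def minus_b2_deriv_def
  by (intro ext) (use assms in \<open>auto simp: b_series_def\<close>)

lemma Aconv_if_bounded:
  assumes "\<And>p q. norm (f p q) \<le> K"
  shows "f \<in> Aconv"
proof -
  have K: "0 \<le> K" using assms[of 0 0] norm_ge_zero order_trans by blast
  have "norm (f p q) \<le> (K + 1) * 2 ^ (p + q) * fact q" for p q
  proof -
    have "1 \<le> (2::real) ^ (p + q) * fact q"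
      using mult_mono[OF one_le_power[of 2 "p + q"] fact_ge_1[of q]] by simp
    then have "K + 1 \<le> (K + 1) * (2 ^ (p + q) * fact q)"
      using K mult_left_mono[of 1 _ "K + 1"] by simp
    then show ?thesis using assms[of p q] by (simp add: mult.assoc)
  qed
  then show ?thesis unfolding Aconv_def using K
    by (intro CollectI exI[of _ "2::real"] exI[of _ "K + 1"]) auto
qed

lemma A_a_Aconv: "A_a \<in> Aconv"
  by (rule Aconv_if_bounded[where K=1]) (simp add: A_a_def)

lemma A_b_Aconv: "A_b \<in> Aconv"
  by (rule Aconv_if_bounded[where K=1]) (simp add: A_b_def)

lemma A_const_Aconv: "A_const c \<in> Aconv"
  by (rule Aconv_if_bounded[where K="norm c"]) (simp add: A_const_def)

lemma A_mult_A_b_A_a_Aconv: "A_mult A_b A_a \<in> Aconv"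
  unfolding A_mult_b_series_A_a[OF b_series_A_b]
  by (rule Aconv_if_bounded[where K=1]) (auto simp: A_b_def simp del: of_nat_diff)

lemma A_mult_A_b_A_b_Aconv: "A_mult A_b A_b \<in> Aconv"
  unfolding A_mult_b_series_A_b[OF b_series_A_b]
  by (rule Aconv_if_bounded[where K=1]) (auto simp: A_b_def)

lemma A_add_A_const: "A_add (A_const c) (A_const d) = A_const (c + d)"
  unfolding A_add_def A_const_def by (intro ext) auto

lemma A_const_1: "A_const 1 = A_one"
  by (auto simp: A_one_def A_const_def)

lemma Bconv_subset_Aconv: "Bconv \<subseteq> Aconv"
proof
  fix \<beta> assume "\<beta> \<in> Bconv"
  then obtain R C where RC: "R > 1" "C > 0" "\<forall>q. norm (\<beta> 0 q) \<le> C * R ^ q * fact q"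
    and "b_series \<beta>" unfolding Bconv_def b_series_def by blast
  have "norm (\<beta> p q) \<le> C * R ^ (p + q) * fact q" for p q
    using RC \<open>b_series \<beta>\<close> by (cases "p = 0") (auto simp: b_series_def)
  then show "\<beta> \<in> Aconv" unfolding Aconv_def using RC by blast
qed

lemma A_mult_A_a_Bconv:
  assumes "\<beta> \<in> Bconv"
  shows "A_mult A_a \<beta> \<in> Aconv"
proof -
  obtain R C where RC: "R > 1" "C > 0" "\<forall>q. norm (\<beta> 0 q) \<le> C * R ^ q * fact q"
    and "b_series \<beta>" using assms unfolding Bconv_def b_series_def by blast
  have "norm (A_mult A_a \<beta> p q) \<le> C * R ^ (p + q) * fact q" for p q
  proof (cases "p = 1")
    case True
    have "norm (\<beta> 0 q) \<le> C * R ^ q * fact q"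
      using RC by blast
    also have "\<dots> \<le> C * R ^ (p + q) * fact q"
      using RC by (intro mult_right_mono mult_left_mono power_increasing) auto
    finally show ?thesis using True by (simp add: A_mult_A_a_left)
  next
    case False
    then show ?thesis
      using RC \<open>b_series \<beta>\<close> by (auto simp: A_mult_A_a_left b_series_def)
  qed
  then show ?thesis unfolding Aconv_def using RC by blast
qed

text \<open>The factor \<open>q!\<close> in the growth bound is what makes \<open>B\<close> stable under \<open>\<beta> \<mapsto> b^2 \<beta>'\<close>.\<close>
lemma Bconv_if_dominated_by_shift:
  assumes "\<beta> \<in> Bconv" "b_series \<gamma>" "\<gamma> 0 0 = 0"
    and "\<And>q. 0 < q \<Longrightarrow> norm (\<gamma> 0 q) \<le> q * norm (\<beta> 0 (q - 1))"
  shows "\<gamma> \<in> Bconv"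
proof -
  obtain R C where RC: "R > 1" "C > 0" "\<forall>q. norm (\<beta> 0 q) \<le> C * R ^ q * fact q"
    using assms(1) unfolding Bconv_def by blast
  have "norm (\<gamma> 0 q) \<le> C * R ^ q * fact q" for q
  proof (cases "q = 0")
    case True
    then show ?thesis using RC assms(3) by simp
  next
    case False
    have "norm (\<gamma> 0 q) \<le> q * norm (\<beta> 0 (q - 1))"
      using assms(4) False by simp
    also have "\<dots> \<le> q * (C * R ^ (q - 1) * fact (q - 1))"
      using RC(3) by (intro mult_left_mono) auto
    also have "\<dots> = C * R ^ (q - 1) * fact q"
      using False by (simp add: fact_reduce)
    also have "\<dots> \<le> C * R ^ q * fact q"
      using RC by (intro mult_right_mono mult_left_mono power_increasing) auto
    finally show ?thesis .
  qed
  then show ?thesis unfolding Bconv_def using assms(2) RC by (auto simp: b_series_def)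
qed

lemma A_mult_Bconv_A_b:
  assumes "\<beta> \<in> Bconv"
  shows "A_mult \<beta> A_b \<in> Bconv"
  using assms
  by (rule Bconv_if_dominated_by_shift)
    (auto simp: A_mult_b_series_A_b[OF b_series_if_Bconv[OF assms]] b_series_def mult_le_cancel_right1)

lemma minus_b2_deriv_Bconv: "\<beta> \<in> Bconv \<Longrightarrow> minus_b2_deriv \<beta> \<in> Bconv"
  by (rule Bconv_if_dominated_by_shift)
    (auto simp: minus_b2_deriv_def b_series_def norm_mult intro!: mult_right_mono simp del: of_nat_diff)

context
  fixes act :: "ser \<Rightarrow> 'm::ab_group_add \<Rightarrow> 'm"
  assumes module: "Aconv_module act"
begin

lemma additive_act: "f \<in> Aconv \<Longrightarrow> additive (act f)"
  using module unfolding Aconv_module_def additive_def by blast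

lemma act_A_add: "f \<in> Aconv \<Longrightarrow> g \<in> Aconv \<Longrightarrow> act (A_add f g) x = act f x + act g x"
  using module unfolding Aconv_module_def by blast

lemma act_A_mult: "f \<in> Aconv \<Longrightarrow> g \<in> Aconv \<Longrightarrow> act (A_mult f g) x = act f (act g x)"
  using module unfolding Aconv_module_def by blast

lemma act_A_one: "act A_one x = x"
  using module unfolding Aconv_module_def by blast

lemma act_A_a_A_b: "act A_a (act A_b w) = act A_b (act A_a w) + act A_b (act A_b w)"
proof -
  have "act A_a (act A_b w) = act (A_mult A_a A_b) w"
    by (simp add: act_A_mult A_a_Aconv A_b_Aconv)
  also have "\<dots> = act (A_mult A_b A_a) w + act (A_mult A_b A_b) w"
    unfolding A_mult_A_a_A_b by (rule act_A_add[OF A_mult_A_b_A_a_Aconv A_mult_A_b_A_b_Aconv])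
  also have "\<dots> = act A_b (act A_a w) + act A_b (act A_b w)"
    by (simp add: act_A_mult A_a_Aconv A_b_Aconv)
  finally show ?thesis .
qed

lemma nat_mult_act_A_const: "nat_mult n (act (A_const c) x) = act (A_const (of_nat n * c)) x"
proof (induction n)
  case 0
  have "act (A_const 0) x = act (A_add (A_const 0) (A_const 0)) x"
    by (simp add: A_add_A_const)
  also have "\<dots> = act (A_const 0) x + act (A_const 0) x"
    by (rule act_A_add[OF A_const_Aconv A_const_Aconv])
  finally show ?case by simp
next
  case (Suc n)
  have "nat_mult (Suc n) (act (A_const c) x) = act (A_const c) x + act (A_const (of_nat n * c)) x"
    using Suc by simp
  also have "\<dots> = act (A_const (of_nat (Suc n) * c)) x"
    by (simp add: act_A_add[OF A_const_Aconv A_const_Aconv, symmetric] A_add_A_const algebra_simps)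
  finally show ?case .
qed

lemma act_torsion_free:
  fixes x :: 'm
  assumes "0 < n" "nat_mult n x = 0"
  shows "x = 0"
proof -
  interpret scale: additive "act (A_const (1 / of_nat n))"
    by (rule additive_act[OF A_const_Aconv])
  have "x = act (A_const 1) x"
    by (simp add: A_const_1 act_A_one)
  also have "A_const 1 = A_const (of_nat n * (1 / of_nat n))"
    using assms(1) by simp
  also have "act \<dots> x = nat_mult n (act (A_const (1 / of_nat n)) x)"
    by (rule nat_mult_act_A_const[symmetric])
  also have "\<dots> = act (A_const (1 / of_nat n)) (nat_mult n x)"
    by (rule scale.nat_mult[symmetric])
  also have "\<dots> = 0"
    using assms(2) scale.zero by simp
  finally show ?thesis .
qed

lemma act_A_a_ators:
  assumes "y \<in> ators act"
  shows "act A_a y \<in> ators act"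
proof -
  interpret a: additive "act A_a" by (rule additive_act[OF A_a_Aconv])
  obtain n where "(act A_a ^^ n) y = 0"
    using assms unfolding ators_def by blast
  then have "(act A_a ^^ n) (act A_a y) = 0"
    by (simp add: funpow_swap1[symmetric] a.zero)
  then show ?thesis unfolding ators_def by blast
qed

lemma ators_add:
  assumes "y \<in> ators act" "z \<in> ators act"
  shows "y + z \<in> ators act"
proof -
  interpret a_pow: additive "act A_a ^^ k" for k
    by (rule additive_funpow[OF additive_act[OF A_a_Aconv]])
  obtain m n where "(act A_a ^^ m) y = 0" "(act A_a ^^ n) z = 0"
    using assms unfolding ators_def by blast
  then have "(act A_a ^^ (n + m)) y = 0" "(act A_a ^^ (m + n)) z = 0"
    by (simp_all add: funpow_add a_pow.zero)
  then have "(act A_a ^^ (m + n)) (y + z) = 0"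
    by (simp add: a_pow.add add.commute)
  then show ?thesis unfolding ators_def by blast
qed

lemma act_A_b_atilde: "y \<in> atilde act \<Longrightarrow> act A_b y \<in> atilde act"
  unfolding atilde_def
  using A_mult_Bconv_A_b Bconv_subset_Aconv A_b_Aconv by (auto simp: act_A_mult[symmetric])

lemma act_A_a_atilde:
  assumes "y \<in> atilde act"
  shows "act A_a y \<in> atilde act"
  unfolding atilde_def
proof (intro CollectI ballI)
  fix \<beta> assume "\<beta> \<in> Bconv"
  then have "\<beta> \<in> Aconv" "minus_b2_deriv \<beta> \<in> Bconv" "minus_b2_deriv \<beta> \<in> Aconv"
    using Bconv_subset_Aconv minus_b2_deriv_Bconv by blast+
  have "act \<beta> (act A_a y) = act (A_mult A_a \<beta>) y + act (minus_b2_deriv \<beta>) y"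
    using \<open>\<beta> \<in> Bconv\<close> \<open>\<beta> \<in> Aconv\<close> \<open>minus_b2_deriv \<beta> \<in> Aconv\<close>
    by (simp add: act_A_mult[symmetric] A_a_Aconv A_mult_b_series_A_a_eq b_series_if_Bconv
        act_A_add A_mult_A_a_Bconv)
  also have "\<dots> = act A_a (act \<beta> y) + act (minus_b2_deriv \<beta>) y"
    by (simp add: act_A_mult A_a_Aconv \<open>\<beta> \<in> Aconv\<close>)
  finally show "act \<beta> (act A_a y) \<in> ators act"
    using assms \<open>\<beta> \<in> Bconv\<close> \<open>minus_b2_deriv \<beta> \<in> Bconv\<close>
    by (simp add: atilde_def ators_add act_A_a_ators)
qed

end

theorem lemma2p5p3:
  fixes act :: "ser \<Rightarrow> 'm::ab_group_add \<Rightarrow> 'm" and N :: nat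
  assumes "Aconv_module act"
    and "btors act \<subseteq> atilde act"
    and "\<forall>x\<in>atilde act. (act A_a ^^ N) x = 0"
  shows "btors act = atilde act \<and> atilde act \<subseteq> {x. (act A_b ^^ (2 * N)) x = 0}"
proof -
  have A_b_kills: "(act A_b ^^ (2 * N)) y = 0" if "y \<in> atilde act" for y
  proof (rule B_power_vanishes[OF additive_act[OF assms(1) A_a_Aconv] additive_act[OF assms(1) A_b_Aconv]
        act_A_a_A_b[OF assms(1)] _ _ _ act_torsion_free[OF assms(1)] that])
    show "act A_a ` atilde act \<subseteq> atilde act" "act A_b ` atilde act \<subseteq> atilde act"
      using act_A_a_atilde[OF assms(1)] act_A_b_atilde[OF assms(1)] by blast+
  qed (use assms(3) in blast)
  then have "atilde act \<subseteq> btors act"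
    unfolding btors_def by blast
  with assms(2) A_b_kills show ?thesis by blast
qed

end
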